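(* Consider an agent with $b$ neighbors in the networked adversarial $K$-armed bandit setting described in the context, whose neighbors play arbitrarily subject to $q^i_j(t)\ge \varepsilon_i/K$ for all neighbors $i$, arms $j$ and times $t$, where $\varepsilon_i\in(0,1]$. Let $$\Theta=\prod_{i=1}^b\left(1-\frac{\varepsilon_i}{K}\right),\qquad \beta=\frac{1}{1-\left(1-\frac1K\right)\Theta}+1.$$ Then for an appropriate choice of the parameters $\eta\in[0,1]$ and $\delta>0$ (depending on $\Theta$, as well as $K$ and $T$), the regret of the agent using the fixed-parameter $\mathrm{EXPN}$ algorithm satisfies $R\in O\left(\sqrt{\beta T\ln K}\right)$.
   Context: Adversarial networked bandit setting: there are $K$ arms and a horizon $T$. At each time $t$ an adversary fixes a reward vector $g(t)\in[0,1]^K$, the same for all agents. The agent has $b$ neighbors; at time $t$ neighbor $i$ selects an arm drawn from a probability distribution $q^i(t)=(q^i_1(t),\dots,q^i_K(t))$ chosen arbitrarily, each agent drawing independently. The agent selects arm $a(t)$ drawn from her distribution $p(t)$, and observes her own reward, the actions and rewards of her neighbors, and their distributions. Define $p'_j(t)=1-(1-p_j(t))\prod_{i=1}^b(1-q^i_j(t))$ and the estimator $\hat g_j(t)=g_j(t)/p'_j(t)$ if some individual among the agent and her neighbors selects arm $j$ at time $t$, and $0$ otherwise. Fixed-parameter $\mathrm{EXPN}$ with exploration parameter $\eta\in[0,1]$ and update parameter $\delta>0$: weights $w_j(1)=1$, $w_j(t+1)=w_j(t)e^{\delta\hat g_j(t)}$, $W_t=\sum_j w_j(t)$, and $p_j(t)=(1-\eta)\frac{w_j(t)}{W_t}+\frac{\eta}{K}$.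 Regret: $R=\mathbb E\left[\sum_t g_{j^\star}(t)-\sum_t g_{a(t)}(t)\right]$ with $j^\star=\arg\max_j\mathbb E[\sum_t g_j(t)]$, expectation over the randomness of the algorithms. *)

theory Defs
  imports Complex_Main
begin

text \<open>Arms are 0..K-1, neighbours are 0..b-1, rounds are 0-indexed.
A round records the agent's arm and the list (length b) of the neighbours' arms.
A history is a list of rounds, MOST RECENT ROUND FIRST; its length is the
current time. The adversary's reward vector g h and the neighbours'
distributions q h i may depend arbitrarily on the history h.\<close>

type_synonym round = "nat \<times> nat list"
type_synonym hist = "round list"

definition expn_prob :: "nat \<Rightarrow> real \<Rightarrow> (nat \<Rightarrow> real) \<Rightarrow> nat \<Rightarrow> real" where
  "expn_prob K \<eta> w j = (1 - \<eta>) * w j / (\<Sum>k<K. w k) + \<eta> / real K"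

definition obs_prob :: "nat \<Rightarrow> real \<Rightarrow> (nat \<Rightarrow> real) \<Rightarrow> real" where
  "obs_prob b pj qj = 1 - (1 - pj) * (\<Prod>i<b. 1 - qj i)"

definition est_gain :: "round \<Rightarrow> nat \<Rightarrow> real \<Rightarrow> real \<Rightarrow> real" where
  "est_gain r j gj p'j = (if j = fst r \<or> j \<in> set (snd r) then gj / p'j else 0)"

primrec expn_w :: "nat \<Rightarrow> nat \<Rightarrow> real \<Rightarrow> real \<Rightarrow> (hist \<Rightarrow> nat \<Rightarrow> real)
    \<Rightarrow> (hist \<Rightarrow> nat \<Rightarrow> nat \<Rightarrow> real) \<Rightarrow> hist \<Rightarrow> nat \<Rightarrow> real" where
  "expn_w K b \<eta> \<delta> g q [] = (\<lambda>j. 1)"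
| "expn_w K b \<eta> \<delta> g q (r # h) =
     (\<lambda>j. expn_w K b \<eta> \<delta> g q h j *
          exp (\<delta> * est_gain r j (g h j)
                  (obs_prob b (expn_prob K \<eta> (expn_w K b \<eta> \<delta> g q h) j) (\<lambda>i. q h i j))))"

definition expn_p :: "nat \<Rightarrow> nat \<Rightarrow> real \<Rightarrow> real \<Rightarrow> (hist \<Rightarrow> nat \<Rightarrow> real)
    \<Rightarrow> (hist \<Rightarrow> nat \<Rightarrow> nat \<Rightarrow> real) \<Rightarrow> hist \<Rightarrow> nat \<Rightarrow> real" where
  "expn_p K b \<eta> \<delta> g q h = expn_prob K \<eta> (expn_w K b \<eta> \<delta> g q h)"

text \<open>Expectation of f over the next n rounds starting from history h, when the agent
 plays P h and neighbour i independently plays q h i.\<close>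
primrec hist_expect :: "nat \<Rightarrow> nat \<Rightarrow> (hist \<Rightarrow> nat \<Rightarrow> real) \<Rightarrow> (hist \<Rightarrow> nat \<Rightarrow> nat \<Rightarrow> real)
    \<Rightarrow> nat \<Rightarrow> (hist \<Rightarrow> real) \<Rightarrow> hist \<Rightarrow> real" where
  "hist_expect K b P q 0 f h = f h"
| "hist_expect K b P q (Suc n) f h =
     (\<Sum>a<K. \<Sum>c\<in>{c. length c = b \<and> set c \<subseteq> {..<K}}.
        (P h a * (\<Prod>i<b. q h i (c ! i))) * hist_expect K b P q n f ((a, c) # h))"

primrec arm_gain :: "(hist \<Rightarrow> nat \<Rightarrow> real) \<Rightarrow> nat \<Rightarrow> hist \<Rightarrow> real" where
  "arm_gain g j [] = 0"
| "arm_gain g j (r # h) = arm_gain g j h + g h j"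

primrec agent_gain :: "(hist \<Rightarrow> nat \<Rightarrow> real) \<Rightarrow> hist \<Rightarrow> real" where
  "agent_gain g [] = 0"
| "agent_gain g (r # h) = agent_gain g h + g h (fst r)"

definition expn_regret :: "nat \<Rightarrow> nat \<Rightarrow> real \<Rightarrow> real \<Rightarrow> (hist \<Rightarrow> nat \<Rightarrow> real)
    \<Rightarrow> (hist \<Rightarrow> nat \<Rightarrow> nat \<Rightarrow> real) \<Rightarrow> nat \<Rightarrow> real" where
  "expn_regret K b \<eta> \<delta> g q T =
     (MAX j\<in>{..<K}. hist_expect K b (expn_p K b \<eta> \<delta> g q) q T (arm_gain g j) [])
     - hist_expect K b (expn_p K b \<eta> \<delta> g q) q T (agent_gain g) []"

definition valid_env :: "nat \<Rightarrow> nat \<Rightarrow> (nat \<Rightarrow> real) \<Rightarrow> (hist \<Rightarrow> nat \<Rightarrow> real)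
    \<Rightarrow> (hist \<Rightarrow> nat \<Rightarrow> nat \<Rightarrow> real) \<Rightarrow> bool" where
  "valid_env K b \<epsilon> g q \<longleftrightarrow>
     (\<forall>h j. j < K \<longrightarrow> 0 \<le> g h j \<and> g h j \<le> 1) \<and>
     (\<forall>h i. i < b \<longrightarrow> (\<forall>j<K. \<epsilon> i / real K \<le> q h i j) \<and> (\<Sum>j<K. q h i j) = 1)"

end

theory Submission
  imports Defs
begin

text \<open>EXPN is Exp3 run on the importance-weighted estimates g_j / p'_j, which are unbiased
  given the history. Every neighbour misses arm j with probability at most 1 - \<epsilon>_i / K, so
  p'_j \<ge> 1 - \<Theta> + \<Theta> p_j; hence the second moment \<Sum>_j p_j g_j^2 / p'_j of the estimates
  is at most \<Sum>_j p_j / (1 - \<Theta> + \<Theta> p_j), which by concavity is at most its value at the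
  uniform distribution, \<beta> - 1. Moreover p'_j \<ge> \<eta> / (\<beta> - 1), so for
  \<delta> \<le> \<eta> / (\<beta> - 1) every exponent of the weight update stays below 1 and the usual potential
  argument on ln \<Sum>_j w_j bounds the regret by \<eta> T + ln K / \<delta> + (\<beta> - 1) \<delta> T. Taking
  \<eta> = sqrt ((\<beta> - 1) ln K / (2 T)) and \<delta> = \<eta> / (\<beta> - 1) gives at most
  4 \<eta> T \<le> 3 sqrt (\<beta> T ln K).\<close>

definition arm_lists :: "nat \<Rightarrow> nat \<Rightarrow> nat list set" where
  "arm_lists K b = {c. length c = b \<and> set c \<subseteq> {..<K}}"

lemma arm_lists_Suc: "arm_lists K (Suc b) = (\<lambda>(x, c). x # c) ` ({..<K} \<times> arm_lists K b)"
  by (auto simp: arm_lists_def length_Suc_conv image_iff)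

lemma sum_prod_arm_lists:
  fixes f :: "nat \<Rightarrow> nat \<Rightarrow> 'a :: comm_semiring_1"
  shows "(\<Sum>c\<in>arm_lists K b. \<Prod>i<b. f i (c ! i)) = (\<Prod>i<b. \<Sum>k<K. f i k)"
proof (induction b arbitrary: f)
  case 0
  have "arm_lists K 0 = {[]}" by (auto simp: arm_lists_def)
  then show ?case by simp
next
  case (Suc b)
  have inj: "inj_on (\<lambda>(x, c). x # c) ({..<K} \<times> arm_lists K b)" by (auto simp: inj_on_def)
  have "(\<Sum>c\<in>arm_lists K (Suc b). \<Prod>i<Suc b. f i (c ! i))
      = (\<Sum>(x, c)\<in>{..<K} \<times> arm_lists K b. \<Prod>i<Suc b. f i ((x # c) ! i))"
    unfolding arm_lists_Suc by (subst sum.reindex[OF inj]) (simp add: case_prod_unfold)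
  also have "\<dots> = (\<Sum>x<K. \<Sum>c\<in>arm_lists K b. f 0 x * (\<Prod>i<b. f (Suc i) (c ! i)))"
    by (simp add: sum.cartesian_product[symmetric] prod.lessThan_Suc_shift del: prod.lessThan_Suc)
  also have "\<dots> = (\<Sum>x<K. f 0 x) * (\<Prod>i<b. \<Sum>k<K. f (Suc i) k)"
    by (simp only: sum_distrib_left[symmetric] sum_distrib_right[symmetric] Suc.IH[of "\<lambda>i. f (Suc i)"])
  finally show ?case by (simp only: prod.lessThan_Suc_shift)
qed

definition distr :: "nat \<Rightarrow> (nat \<Rightarrow> real) \<Rightarrow> bool" where
  "distr K p \<longleftrightarrow> (\<forall>k<K. 0 \<le> p k) \<and> (\<Sum>k<K. p k) = 1"

definition round_expect ::
    "nat \<Rightarrow> nat \<Rightarrow> (nat \<Rightarrow> real) \<Rightarrow> (nat \<Rightarrow> nat \<Rightarrow> real) \<Rightarrow> (nat \<Rightarrow> nat list \<Rightarrow> real) \<Rightarrow> real"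
  where
  "round_expect K b p qs f = (\<Sum>a<K. \<Sum>c\<in>arm_lists K b. (p a * (\<Prod>i<b. qs i (c ! i))) * f a c)"

lemma hist_expect_Suc_round:
  "hist_expect K b P q (Suc n) f h =
     round_expect K b (P h) (q h) (\<lambda>a c. hist_expect K b P q n f ((a, c) # h))"
  by (simp add: round_expect_def arm_lists_def)

declare hist_expect.simps(2) [simp del]

lemma hist_expect_one:
  "hist_expect K b P q 1 f h = round_expect K b (P h) (q h) (\<lambda>a c. f ((a, c) # h))"
  using hist_expect_Suc_round[of K b P q 0 f h] by simp

lemma round_expect_cong:
  "(\<And>a c. a < K \<Longrightarrow> c \<in> arm_lists K b \<Longrightarrow> f a c = f' a c) \<Longrightarrow>
    round_expect K b p qs f = round_expect K b p qs f'"
  unfolding round_expect_def by (intro sum.cong refl) auto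

lemma round_expect_add:
  "round_expect K b p qs (\<lambda>a c. f a c + f' a c) = round_expect K b p qs f + round_expect K b p qs f'"
  by (simp add: round_expect_def distrib_left sum.distrib)

lemma round_expect_diff:
  "round_expect K b p qs (\<lambda>a c. f a c - f' a c) = round_expect K b p qs f - round_expect K b p qs f'"
  by (simp add: round_expect_def right_diff_distrib sum_subtractf)

lemma round_expect_scale:
  "round_expect K b p qs (\<lambda>a c. x * f a c) = x * round_expect K b p qs f"
  by (simp add: round_expect_def sum_distrib_left ac_simps)

lemma round_expect_sum:
  "round_expect K b p qs (\<lambda>a c. \<Sum>k\<in>A. f k a c) = (\<Sum>k\<in>A. round_expect K b p qs (f k))"
  unfolding round_expect_def sum_distrib_left
  by (subst sum.swap, rule sum.cong[OF refl], rule sum.swap)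

lemma round_expect_agent:
  assumes "\<forall>i<b. distr K (qs i)"
  shows "round_expect K b p qs (\<lambda>a c. f a) = (\<Sum>a<K. p a * f a)"
proof -
  have "(\<Sum>c\<in>arm_lists K b. \<Prod>i<b. qs i (c ! i)) = 1"
    using assms by (simp add: sum_prod_arm_lists distr_def)
  then show ?thesis
    by (simp add: round_expect_def sum_distrib_left[symmetric] sum_distrib_right[symmetric] ac_simps)
qed

lemma round_expect_const:
  assumes "distr K p" "\<forall>i<b. distr K (qs i)"
  shows "round_expect K b p qs (\<lambda>a c. x) = x"
  using round_expect_agent[OF assms(2), of p "\<lambda>_. x"] assms(1)
  by (simp add: distr_def sum_distrib_right[symmetric])

lemma round_expect_mono:
  assumes "distr K p" "\<forall>i<b. distr K (qs i)"
    and "\<And>a c. a < K \<Longrightarrow> c \<in> arm_lists K b \<Longrightarrow> f a c \<le> f' a c"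
  shows "round_expect K b p qs f \<le> round_expect K b p qs f'"
  unfolding round_expect_def
proof (intro sum_mono mult_left_mono)
  fix a c assume "a \<in> {..<K}" "c \<in> arm_lists K b"
  moreover from \<open>c \<in> arm_lists K b\<close> have "\<forall>i<b. c ! i < K"
    unfolding arm_lists_def using nth_mem by fastforce
  ultimately show "0 \<le> p a * (\<Prod>i<b. qs i (c ! i))" "f a c \<le> f' a c"
    using assms by (auto simp: distr_def intro!: mult_nonneg_nonneg prod_nonneg)
qed

lemma prod_not_in_list:
  "(\<Prod>i<length c. if c ! i = k then 0 else 1 :: real) = (if k \<in> set c then 0 else 1)"
  by (induction c) (simp_all add: prod.lessThan_Suc_shift del: prod.lessThan_Suc)

lemma sum_except:
  fixes f :: "nat \<Rightarrow> real"
  assumes "k < K"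
  shows "(\<Sum>x<K. f x * (if x = k then 0 else 1)) = (\<Sum>x<K. f x) - f k"
  using assms by (simp add: sum.remove[of "{..<K}" k] if_distrib sum.If_cases Diff_eq)

text \<open>The complementary event, that the agent and every neighbour miss arm k, has
  product form.\<close>
lemma round_expect_observed:
  assumes "distr K p" "\<forall>i<b. distr K (qs i)" "k < K"
  shows "round_expect K b p qs (\<lambda>a c. if k = a \<or> k \<in> set c then 1 else 0)
       = obs_prob b (p k) (\<lambda>i. qs i k)"
proof -
  let ?miss = "\<lambda>a c. (if a = k then 0 else 1) * (\<Prod>i<b. if c ! i = k then 0 else 1 :: real)"
  have "round_expect K b p qs (\<lambda>a c. if k = a \<or> k \<in> set c then 1 else 0)
      = round_expect K b p qs (\<lambda>a c. 1 - ?miss a c)"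
  proof (rule round_expect_cong)
    fix a c assume "c \<in> arm_lists K b"
    then show "(if k = a \<or> k \<in> set c then 1 else 0) = 1 - ?miss a c"
      using prod_not_in_list[of c k] by (auto simp: arm_lists_def)
  qed
  also have "\<dots> = 1 - round_expect K b p qs ?miss"
    by (simp add: round_expect_diff round_expect_const[OF assms(1,2)])
  also have "round_expect K b p qs ?miss
      = (\<Sum>a<K. p a * (if a = k then 0 else 1))
        * (\<Sum>c\<in>arm_lists K b. \<Prod>i<b. qs i (c ! i) * (if c ! i = k then 0 else 1))"
    by (simp add: round_expect_def sum_product prod.distrib ac_simps)
  also have "\<dots> = (1 - p k) * (\<Prod>i<b. 1 - qs i k)"
    using assms
    by (simp add: sum_prod_arm_lists[of "\<lambda>i x. qs i x * (if x = k then 0 else 1)"]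
        sum_except distr_def)
  finally show ?thesis by (simp add: obs_prob_def)
qed

definition distr_profile ::
    "nat \<Rightarrow> nat \<Rightarrow> (hist \<Rightarrow> nat \<Rightarrow> real) \<Rightarrow> (hist \<Rightarrow> nat \<Rightarrow> nat \<Rightarrow> real) \<Rightarrow> bool" where
  "distr_profile K b P q \<longleftrightarrow> (\<forall>h. distr K (P h) \<and> (\<forall>i<b. distr K (q h i)))"

lemma hist_expect_add:
  "hist_expect K b P q n (\<lambda>h. f h + f' h) h = hist_expect K b P q n f h + hist_expect K b P q n f' h"
  by (induction n arbitrary: h) (simp_all add: hist_expect_Suc_round round_expect_add)

lemma hist_expect_diff:
  "hist_expect K b P q n (\<lambda>h. f h - f' h) h = hist_expect K b P q n f h - hist_expect K b P q n f' h"
  by (induction n arbitrary: h) (simp_all add: hist_expect_Suc_round round_expect_diff)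

lemma hist_expect_scale:
  "hist_expect K b P q n (\<lambda>h. x * f h) h = x * hist_expect K b P q n f h"
  by (induction n arbitrary: h) (simp_all add: hist_expect_Suc_round round_expect_scale)

lemma hist_expect_add_steps:
  "hist_expect K b P q (m + n) f h = hist_expect K b P q m (hist_expect K b P q n f) h"
  by (induction m arbitrary: h) (simp_all add: hist_expect_Suc_round)

context
  fixes K b P q
  assumes profile: "distr_profile K b P q"
begin

lemma hist_expect_const: "hist_expect K b P q n (\<lambda>h. x) h = x"
  using profile
  by (induction n arbitrary: h) (simp_all add: hist_expect_Suc_round round_expect_const distr_profile_def)

lemma hist_expect_mono:
  assumes "\<And>h. f h \<le> f' h"
  shows "hist_expect K b P q n f h \<le> hist_expect K b P q n f' h"
  using profile
  by (induction n arbitrary: h)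
    (simp_all add: assms hist_expect_Suc_round round_expect_mono distr_profile_def)

lemma hist_expect_drift:
  assumes "\<And>h. hist_expect K b P q 1 F h \<le> F h + x"
  shows "hist_expect K b P q n F h \<le> F h + real n * x"
proof (induction n)
  case 0
  then show ?case by simp
next
  case (Suc n)
  have "hist_expect K b P q (Suc n) F h = hist_expect K b P q n (hist_expect K b P q 1 F) h"
    using hist_expect_add_steps[of K b P q n 1 F h] by simp
  also have "\<dots> \<le> hist_expect K b P q n (\<lambda>h. F h + x) h"
    by (rule hist_expect_mono[OF assms])
  also have "\<dots> = hist_expect K b P q n F h + x"
    by (simp add: hist_expect_add hist_expect_const)
  finally show ?case using Suc.IH by (simp add: algebra_simps)
qed

end

lemma frac_le_tangent:
  fixes a t u v :: real
  assumes "0 \<le> a" "0 \<le> t" "0 < a + t * u" "0 < a + t * v"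
  shows "u / (a + t * u) \<le> v / (a + t * v) + a / (a + t * v)^2 * (u - v)"
proof -
  define d where "d = a + t * u"
  define m where "m = a + t * v"
  have "d > 0" "m > 0" using assms by (auto simp: d_def m_def)
  have "(v * m + a * (u - v)) * d - u * m^2 = a * t * (u - v)^2"
    by (simp add: d_def m_def power2_eq_square algebra_simps)
  moreover have "0 \<le> a * t * (u - v)^2" using assms by simp
  ultimately have "u * m^2 \<le> (v * m + a * (u - v)) * d" by linarith
  then have "u / d \<le> (v * m + a * (u - v)) / m^2"
    using \<open>d > 0\<close> \<open>m > 0\<close> by (simp add: divide_simps mult.commute)
  also have "\<dots> = v / m + a / m^2 * (u - v)"
    using \<open>m > 0\<close> by (simp add: divide_simps power2_eq_square)
  finally show ?thesis by (simp add: d_def m_def)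
qed

text \<open>x / (1 - \<Theta> + \<Theta> x) is concave, so each summand lies below its tangent at 1/K.\<close>
lemma sum_concave_frac_le:
  fixes p :: "nat \<Rightarrow> real" and \<Theta> :: real
  assumes "1 \<le> K" "0 \<le> \<Theta>" "\<Theta> \<le> 1"
    and p: "\<And>k. k < K \<Longrightarrow> 0 < p k \<and> p k \<le> 1" "(\<Sum>k<K. p k) = 1"
  shows "(\<Sum>k<K. p k / (1 - \<Theta> + \<Theta> * p k)) \<le> 1 / (1 - \<Theta> + \<Theta> / real K)"
proof -
  define a where "a = 1 - \<Theta>"
  define v where "v = 1 / real K"
  have "0 \<le> a" "0 < v" using assms by (simp_all add: a_def v_def)
  have m: "0 < a + \<Theta> * v"
    using \<open>0 \<le> a\<close> \<open>0 < v\<close> assms by (cases "\<Theta> = 0") (auto simp: a_def intro: add_nonneg_pos)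
  have "(\<Sum>k<K. p k / (a + \<Theta> * p k)) \<le> (\<Sum>k<K. v / (a + \<Theta> * v) + a / (a + \<Theta> * v)^2 * (p k - v))"
  proof (intro sum_mono frac_le_tangent[OF \<open>0 \<le> a\<close> \<open>0 \<le> \<Theta>\<close> _ m])
    fix k assume "k \<in> {..<K}"
    then have "0 < p k" "p k \<le> 1" using p by auto
    then have "p k \<le> a + \<Theta> * p k"
      using mult_nonneg_nonneg[of "1 - \<Theta>" "1 - p k"] assms by (simp add: a_def algebra_simps)
    then show "0 < a + \<Theta> * p k" using \<open>0 < p k\<close> by linarith
  qed
  also have "\<dots> = real K * v / (a + \<Theta> * v) + a / (a + \<Theta> * v)^2 * (1 - real K * v)"
  proof -
    have "(\<Sum>k<K. a / (a + \<Theta> * v)^2 * (p k - v)) = a / (a + \<Theta> * v)^2 * (1 - real K * v)"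
      by (simp only: sum_distrib_left[symmetric] sum_subtractf p(2)) simp
    then show ?thesis by (simp add: sum.distrib)
  qed
  also have "\<dots> = 1 / (a + \<Theta> * v)" using assms by (simp add: v_def)
  finally show ?thesis by (simp add: a_def v_def)
qed

definition miss_prob_bound :: "nat \<Rightarrow> nat \<Rightarrow> (nat \<Rightarrow> real) \<Rightarrow> real" where
  "miss_prob_bound K b \<epsilon> = (\<Prod>i<b. 1 - \<epsilon> i / real K)"

lemma miss_prob_bound_bounds:
  assumes "1 \<le> K" "\<forall>i<b. 0 < \<epsilon> i \<and> \<epsilon> i \<le> 1"
  shows "0 \<le> miss_prob_bound K b \<epsilon>" "miss_prob_bound K b \<epsilon> \<le> 1"
proof -
  have "\<forall>i\<in>{..<b}. 0 \<le> 1 - \<epsilon> i / real K \<and> 1 - \<epsilon> i / real K \<le> 1"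
    using assms by auto
  then show "0 \<le> miss_prob_bound K b \<epsilon>" "miss_prob_bound K b \<epsilon> \<le> 1"
    unfolding miss_prob_bound_def by (auto intro: prod_nonneg prod_le_1)
qed

text \<open>The paper's 1 / (\<beta> - 1).\<close>
definition expn_rate :: "nat \<Rightarrow> real \<Rightarrow> real" where
  "expn_rate K \<Theta> = 1 - (1 - 1 / real K) * \<Theta>"

lemma expn_rate_pos:
  assumes "1 \<le> K" "\<Theta> \<le> 1"
  shows "0 < expn_rate K \<Theta>"
proof -
  have "0 \<le> (1 - \<Theta>) * (1 - 1 / real K)" using assms by simp
  moreover have "expn_rate K \<Theta> = (1 - \<Theta>) * (1 - 1 / real K) + 1 / real K"
    by (simp add: expn_rate_def algebra_simps add_divide_distrib[symmetric])
  moreover have "0 < 1 / real K" using assms by simp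
  ultimately show ?thesis by linarith
qed

lemma Max_diff_le:
  fixes G :: "nat \<Rightarrow> real"
  assumes "1 \<le> K" "\<And>j. j < K \<Longrightarrow> G j - A \<le> x"
  shows "(MAX j\<in>{..<K}. G j) - A \<le> x"
proof -
  have "0 \<in> {..<K}" using assms(1) by simp
  then have "G ` {..<K} \<noteq> {}" by blast
  then have "(MAX j\<in>{..<K}. G j) \<le> x + A"
    using assms(2) by (subst Max_le_iff) (auto simp: algebra_simps)
  then show ?thesis by simp
qed

locale expn =
  fixes K b :: nat and \<epsilon> :: "nat \<Rightarrow> real" and g :: "hist \<Rightarrow> nat \<Rightarrow> real"
    and q :: "hist \<Rightarrow> nat \<Rightarrow> nat \<Rightarrow> real" and \<eta> \<delta> :: real
  assumes K_pos: "1 \<le> K" and eps: "\<forall>i<b. 0 < \<epsilon> i \<and> \<epsilon> i \<le> 1"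
    and env: "valid_env K b \<epsilon> g q" and eta: "0 \<le> \<eta>" "\<eta> \<le> 1" and delta_pos: "0 < \<delta>"
begin

abbreviation "w \<equiv> expn_w K b \<eta> \<delta> g q"
abbreviation "P \<equiv> expn_p K b \<eta> \<delta> g q"
abbreviation "W h \<equiv> (\<Sum>k<K. w h k)"
abbreviation "\<Theta> \<equiv> miss_prob_bound K b \<epsilon>"
abbreviation "rate \<equiv> expn_rate K \<Theta>"

definition obs :: "hist \<Rightarrow> nat \<Rightarrow> real" where
  "obs h k = obs_prob b (P h k) (\<lambda>i. q h i k)"

definition ghat :: "round \<Rightarrow> hist \<Rightarrow> nat \<Rightarrow> real" where
  "ghat r h k = est_gain r k (g h k) (obs h k)"

lemma gain_bounds: "k < K \<Longrightarrow> 0 \<le> g h k \<and> g h k \<le> 1"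
  using env by (simp add: valid_env_def)

lemma q_ge: "i < b \<Longrightarrow> k < K \<Longrightarrow> \<epsilon> i / real K \<le> q h i k"
  using env by (simp add: valid_env_def)

lemma q_distr: "i < b \<Longrightarrow> distr K (q h i)"
proof -
  assume i: "i < b"
  have "0 \<le> \<epsilon> i / real K" using eps i by (simp add: less_imp_le)
  then have "\<forall>k<K. 0 \<le> q h i k" using q_ge[OF i] order_trans by blast
  then show ?thesis using env i by (simp add: valid_env_def distr_def)
qed

lemma q_le_one: "i < b \<Longrightarrow> k < K \<Longrightarrow> q h i k \<le> 1"
  using q_distr[of i h] member_le_sum[of k "{..<K}" "q h i"] by (simp add: distr_def)

lemma w_Cons: "w (r # h) k = w h k * exp (\<delta> * ghat r h k)"
  by (simp add: ghat_def obs_def expn_p_def)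

declare expn_w.simps(2) [simp del]

lemma w_pos: "0 < w h k"
  by (induction h arbitrary: k) (simp_all add: w_Cons)

lemma W_pos: "0 < W h"
  using K_pos w_pos by (intro sum_pos) (auto simp: lessThan_empty_iff)

lemma w_le_W: "k < K \<Longrightarrow> w h k \<le> W h"
  using w_pos by (intro member_le_sum) (auto intro: less_imp_le)

lemma P_eq: "P h k = (1 - \<eta>) * w h k / W h + \<eta> / real K"
  by (simp add: expn_p_def expn_prob_def)

lemma P_ge: "\<eta> / real K \<le> P h k"
  using eta w_pos[of h k] W_pos[of h] by (simp add: P_eq)

lemma P_pos: "0 < P h k"
proof (cases "\<eta> = 1")
  case True
  then show ?thesis unfolding P_eq using K_pos by simp
next
  case False
  then have "0 < (1 - \<eta>) * w h k / W h" using eta w_pos W_pos by simp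
  then show ?thesis using eta by (simp add: P_eq add_pos_nonneg)
qed

lemma P_sum: "(\<Sum>k<K. P h k) = 1"
proof -
  have "(\<Sum>k<K. P h k) = (1 - \<eta>) / W h * W h + real K * (\<eta> / real K)"
    by (simp add: P_eq sum.distrib sum_distrib_left[symmetric] sum_divide_distrib[symmetric])
  then show ?thesis using W_pos[of h] K_pos by simp
qed

lemma P_le_one: "k < K \<Longrightarrow> P h k \<le> 1"
  using P_pos P_sum member_le_sum[of k "{..<K}" "P h"] by (simp add: less_imp_le)

lemma profile: "distr_profile K b P q"
  using P_pos P_sum q_distr by (auto simp: distr_profile_def distr_def less_imp_le)

lemma profile_at: "distr K (P h)" "\<forall>i<b. distr K (q h i)"
  using profile by (auto simp: distr_profile_def)

lemma Theta_bounds: "0 \<le> \<Theta>" "\<Theta> \<le> 1"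
  using miss_prob_bound_bounds[OF K_pos eps] by auto

lemma rate_eq: "rate = 1 - \<Theta> + \<Theta> / real K"
  by (simp add: expn_rate_def algebra_simps)

lemma rate_pos: "0 < rate"
  using expn_rate_pos[OF K_pos Theta_bounds(2)] .

lemma obs_ge: "k < K \<Longrightarrow> 1 - \<Theta> + \<Theta> * P h k \<le> obs h k"
proof -
  assume k: "k < K"
  have "(\<Prod>i<b. 1 - q h i k) \<le> \<Theta>"
    unfolding miss_prob_bound_def using q_le_one q_ge k by (intro prod_mono) auto
  then have "(1 - P h k) * (\<Prod>i<b. 1 - q h i k) \<le> (1 - P h k) * \<Theta>"
    using P_le_one[OF k] by (intro mult_left_mono) auto
  then show ?thesis by (simp add: obs_def obs_prob_def algebra_simps)
qed

lemma P_le_obs_floor: "k < K \<Longrightarrow> P h k \<le> 1 - \<Theta> + \<Theta> * P h k"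
  using mult_nonneg_nonneg[of "1 - \<Theta>" "1 - P h k"] Theta_bounds P_le_one[of k h]
  by (simp add: algebra_simps)

lemma obs_pos: "k < K \<Longrightarrow> 0 < obs h k"
  using P_pos[of h k] P_le_obs_floor[of k h] obs_ge[of k h] by linarith

lemma obs_ge_rate: "k < K \<Longrightarrow> \<eta> * rate \<le> obs h k"
proof -
  assume k: "k < K"
  have "\<eta> * rate = \<eta> * (1 - \<Theta>) + \<Theta> * (\<eta> / real K)" by (simp add: rate_eq algebra_simps)
  also have "\<dots> \<le> (1 - \<Theta>) + \<Theta> * P h k"
    using Theta_bounds eta P_ge[of h k] mult_left_le_one_le[of "1 - \<Theta>" \<eta>]
    by (intro add_mono mult_left_mono) auto
  finally show ?thesis using obs_ge[OF k, of h] by linarith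
qed

lemma ghat_eq: "ghat r h k = g h k / obs h k * (if k = fst r \<or> k \<in> set (snd r) then 1 else 0)"
  by (simp add: ghat_def est_gain_def)

lemma ghat_nonneg: "k < K \<Longrightarrow> 0 \<le> ghat r h k"
  using gain_bounds obs_pos by (simp add: ghat_eq less_imp_le)

lemma ghat_unbiased: "k < K \<Longrightarrow> round_expect K b (P h) (q h) (\<lambda>a c. ghat (a, c) h k) = g h k"
  using round_expect_observed[of K "P h" b "q h" k] profile obs_pos[of k h]
  unfolding ghat_eq fst_conv snd_conv round_expect_scale
  by (simp add: distr_profile_def obs_def)

lemma ghat_second_moment:
  "k < K \<Longrightarrow> round_expect K b (P h) (q h) (\<lambda>a c. (ghat (a, c) h k)^2) = (g h k)^2 / obs h k"
proof -
  assume k: "k < K"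
  have "round_expect K b (P h) (q h) (\<lambda>a c. (ghat (a, c) h k)^2)
      = (g h k / obs h k)^2 * round_expect K b (P h) (q h) (\<lambda>a c. if k = a \<or> k \<in> set c then 1 else 0)"
    by (subst round_expect_scale[symmetric], rule round_expect_cong) (simp add: ghat_eq power_mult_distrib)
  then show ?thesis
    using round_expect_observed[of K "P h" b "q h" k] profile k obs_pos[OF k, of h]
    by (simp add: distr_profile_def obs_def power2_eq_square)
qed

lemma delta_ghat_le_one:
  assumes "\<delta> \<le> \<eta> * rate" "k < K"
  shows "\<delta> * ghat r h k \<le> 1"
proof -
  have "g h k / obs h k \<le> 1 / obs h k"
    using gain_bounds[OF assms(2)] obs_pos[OF assms(2)] by (intro divide_right_mono) (auto intro: less_imp_le)
  then have "ghat r h k \<le> 1 / obs h k"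
    using obs_pos[OF assms(2)] by (cases "k = fst r \<or> k \<in> set (snd r)") (simp_all add: ghat_eq less_imp_le)
  then have "\<delta> * ghat r h k \<le> \<delta> * (1 / obs h k)"
    by (rule mult_left_mono) (use delta_pos in auto)
  also have "\<dots> \<le> 1" using assms obs_ge_rate[OF assms(2), of h] obs_pos[OF assms(2), of h] by simp
  finally show ?thesis .
qed

lemma W_Cons_le:
  assumes "\<delta> \<le> \<eta> * rate"
  shows "W (r # h) \<le> W h + (\<Sum>k<K. w h k * (\<delta> * ghat r h k + (\<delta> * ghat r h k)^2))"
proof -
  have "W (r # h) \<le> (\<Sum>k<K. w h k * (1 + \<delta> * ghat r h k + (\<delta> * ghat r h k)^2))"
    unfolding w_Cons using delta_pos ghat_nonneg delta_ghat_le_one[OF assms] w_pos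
    by (intro sum_mono mult_left_mono exp_bound) (auto intro: less_imp_le)
  then show ?thesis by (simp add: algebra_simps sum.distrib)
qed

lemma log_potential_step:
  assumes "\<delta> \<le> \<eta> * rate"
  shows "(1 - \<eta>) * (ln (W (r # h)) - ln (W h))
     \<le> \<delta> * (\<Sum>k<K. P h k * ghat r h k) + \<delta>^2 * (\<Sum>k<K. P h k * (ghat r h k)^2)"
proof -
  define x where "x k = \<delta> * ghat r h k" for k
  define y where "y = (\<Sum>k<K. w h k * (x k + (x k)^2)) / W h"
  have x: "k < K \<Longrightarrow> 0 \<le> x k" for k using ghat_nonneg delta_pos by (simp add: x_def)
  have "0 \<le> y" unfolding y_def using x w_pos W_pos[of h]
    by (intro divide_nonneg_pos sum_nonneg mult_nonneg_nonneg add_nonneg_nonneg)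
      (auto intro: less_imp_le)
  have "W (r # h) / W h \<le> 1 + y"
    using W_Cons_le[OF assms, of r h] W_pos[of h] by (simp add: y_def x_def divide_simps)
  then have "ln (W (r # h) / W h) \<le> ln (1 + y)"
    using W_pos[of h] W_pos[of "r # h"] by (intro ln_mono) auto
  also have "\<dots> \<le> y" using \<open>0 \<le> y\<close> by (rule ln_add_one_self_le_self)
  finally have "(1 - \<eta>) * (ln (W (r # h)) - ln (W h)) \<le> (1 - \<eta>) * y"
    using eta W_pos[of h] W_pos[of "r # h"] by (simp add: ln_divide_pos mult_left_mono)
  also have "\<dots> = (\<Sum>k<K. ((1 - \<eta>) * w h k / W h) * (x k + (x k)^2))"
    by (simp add: y_def sum_distrib_left sum_divide_distrib mult.assoc)
  also have "\<dots> \<le> (\<Sum>k<K. P h k * (x k + (x k)^2))"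
    using eta x by (intro sum_mono mult_right_mono) (auto simp: P_eq)
  also have "\<dots> = \<delta> * (\<Sum>k<K. P h k * ghat r h k) + \<delta>^2 * (\<Sum>k<K. P h k * (ghat r h k)^2)"
    by (simp add: x_def sum_distrib_left sum.distrib power_mult_distrib algebra_simps)
  finally show ?thesis .
qed

lemma second_moment_le:
  "(\<Sum>k<K. P h k * (g h k)^2 / obs h k) \<le> 1 / rate"
proof -
  have "(\<Sum>k<K. P h k * (g h k)^2 / obs h k) \<le> (\<Sum>k<K. P h k / (1 - \<Theta> + \<Theta> * P h k))"
  proof (rule sum_mono)
    fix k assume "k \<in> {..<K}"
    then have k: "k < K" by simp
    have "P h k * (g h k)^2 \<le> P h k"
      using gain_bounds[OF k] P_pos[of h k] by (simp add: mult_left_le power_le_one)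
    then have "P h k * (g h k)^2 / obs h k \<le> P h k / obs h k"
      using obs_pos[OF k, of h] by (intro divide_right_mono) (auto intro: less_imp_le)
    also have "\<dots> \<le> P h k / (1 - \<Theta> + \<Theta> * P h k)"
      using obs_ge[OF k, of h] P_le_obs_floor[OF k, of h] P_pos[of h k]
      by (intro divide_left_mono mult_pos_pos) auto
    finally show "P h k * (g h k)^2 / obs h k \<le> P h k / (1 - \<Theta> + \<Theta> * P h k)" .
  qed
  also have "\<dots> \<le> 1 / rate"
    unfolding rate_eq using P_pos P_le_one P_sum
    by (intro sum_concave_frac_le[OF K_pos Theta_bounds]) (auto simp: less_imp_le)
  finally show ?thesis .
qed

text \<open>True minus estimated scaled regret against arm j, plus the second-order terms of the
  potential argument. The estimator being unbiased, only the latter contribute to the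
  expected increment.\<close>
primrec estimation_noise :: "nat \<Rightarrow> hist \<Rightarrow> real" where
  "estimation_noise j [] = 0"
| "estimation_noise j (r # h) = estimation_noise j h + (1 - \<eta>) * \<delta> * (g h j - ghat r h j)
     - \<delta> * (g h (fst r) - (\<Sum>k<K. P h k * ghat r h k)) + \<delta>^2 * (\<Sum>k<K. P h k * (ghat r h k)^2)"

definition estimated_gap :: "nat \<Rightarrow> hist \<Rightarrow> real" where
  "estimated_gap j h = (1 - \<eta>) * \<delta> * arm_gain g j h - \<delta> * agent_gain g h - estimation_noise j h"

lemma estimation_noise_drift:
  assumes j: "j < K"
  shows "hist_expect K b P q 1 (estimation_noise j) h \<le> estimation_noise j h + \<delta>^2 / rate"
proof -
  let ?E = "round_expect K b (P h) (q h)"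
  have profile_h: "distr K (P h)" "\<forall>i<b. distr K (q h i)"
    using profile by (auto simp: distr_profile_def)
  have "hist_expect K b P q 1 (estimation_noise j) h
      = estimation_noise j h + (1 - \<eta>) * \<delta> * (g h j - ?E (\<lambda>a c. ghat (a, c) h j))
        - \<delta> * (?E (\<lambda>a c. g h a) - (\<Sum>k<K. P h k * ?E (\<lambda>a c. ghat (a, c) h k)))
        + \<delta>^2 * (\<Sum>k<K. P h k * ?E (\<lambda>a c. (ghat (a, c) h k)^2))"
    by (simp only: hist_expect_one estimation_noise.simps fst_conv round_expect_add
        round_expect_diff round_expect_scale round_expect_sum round_expect_const[OF profile_h])
  also have "\<dots> = estimation_noise j h + \<delta>^2 * (\<Sum>k<K. P h k * (g h k)^2 / obs h k)"
    using j by (simp add: ghat_unbiased ghat_second_moment round_expect_agent[OF profile_h(2)])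
  also have "\<dots> \<le> estimation_noise j h + \<delta>^2 * (1 / rate)"
    using second_moment_le by (intro add_left_mono mult_left_mono) auto
  finally show ?thesis by simp
qed

lemma estimated_gap_le_potential:
  assumes "\<delta> \<le> \<eta> * rate" "j < K"
  shows "estimated_gap j h \<le> (1 - \<eta>) * (ln (real K) - (ln (W h) - ln (w h j)))"
proof (induction h)
  case Nil
  then show ?case by (simp add: estimated_gap_def)
next
  case (Cons r h)
  have "estimated_gap j (r # h) = estimated_gap j h + (1 - \<eta>) * \<delta> * ghat r h j
      - \<delta> * (\<Sum>k<K. P h k * ghat r h k) - \<delta>^2 * (\<Sum>k<K. P h k * (ghat r h k)^2)"
    by (simp add: estimated_gap_def algebra_simps)
  moreover have "ln (w (r # h) j) = ln (w h j) + \<delta> * ghat r h j"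
    unfolding w_Cons using w_pos[of h j] by (simp add: ln_mult)
  ultimately show ?case
    using Cons.IH log_potential_step[OF assms(1), of r h] by (simp add: algebra_simps)
qed

lemma estimated_gap_le:
  assumes "\<delta> \<le> \<eta> * rate" "j < K"
  shows "estimated_gap j h \<le> (1 - \<eta>) * ln (real K)"
proof -
  have "ln (w h j) \<le> ln (W h)" using w_le_W[OF assms(2), of h] w_pos[of h j] by simp
  then show ?thesis
    using estimated_gap_le_potential[OF assms, of h] eta mult_left_mono[of "ln (w h j)" "ln (W h)" "1 - \<eta>"]
    by (simp add: algebra_simps)
qed

abbreviation expected :: "nat \<Rightarrow> (hist \<Rightarrow> real) \<Rightarrow> real" where
  "expected T f \<equiv> hist_expect K b P q T f []"

lemma scaled_regret_le:
  assumes "\<delta> \<le> \<eta> * rate" "j < K"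
  shows "(1 - \<eta>) * \<delta> * expected T (arm_gain g j) - \<delta> * expected T (agent_gain g)
     \<le> (1 - \<eta>) * ln (real K) + real T * (\<delta>^2 / rate)"
proof -
  have "(1 - \<eta>) * \<delta> * expected T (arm_gain g j) - \<delta> * expected T (agent_gain g)
      = expected T (\<lambda>h. (1 - \<eta>) * \<delta> * arm_gain g j h - \<delta> * agent_gain g h)"
    by (simp only: hist_expect_diff hist_expect_scale)
  also have "\<dots> = expected T (\<lambda>h. estimated_gap j h + estimation_noise j h)"
    by (simp add: estimated_gap_def)
  also have "\<dots> = expected T (estimated_gap j) + expected T (estimation_noise j)"
    by (rule hist_expect_add)
  also have "expected T (estimated_gap j) \<le> (1 - \<eta>) * ln (real K)"
    using hist_expect_mono[OF profile estimated_gap_le[OF assms], where n = T and h = "[]"]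
    by (simp only: hist_expect_const[OF profile])
  also have "expected T (estimation_noise j) \<le> real T * (\<delta>^2 / rate)"
    using hist_expect_drift[OF profile estimation_noise_drift[OF assms(2)], where n = T and h = "[]"] by simp
  finally show ?thesis by simp
qed

lemma arm_gain_expect_le:
  assumes "j < K"
  shows "expected T (arm_gain g j) \<le> real T"
proof -
  have "hist_expect K b P q 1 (arm_gain g j) h \<le> arm_gain g j h + 1" for h
    using gain_bounds[OF assms, of h] unfolding hist_expect_one
    by (simp add: round_expect_add round_expect_const[OF profile_at])
  from hist_expect_drift[OF profile this, of T "[]"] show ?thesis by simp
qed

lemma agent_gain_expect_nonneg: "0 \<le> expected T (agent_gain g)"
proof -
  have "hist_expect K b P q 1 (agent_gain g) h \<ge> agent_gain g h" for h
  proof -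
    have "0 \<le> round_expect K b (P h) (q h) (\<lambda>a c. g h a)"
      using round_expect_mono[OF profile_at, of "\<lambda>a c. 0" "\<lambda>a c. g h a"] gain_bounds
      by (simp add: round_expect_const[OF profile_at])
    then show ?thesis
      unfolding hist_expect_one by (simp add: round_expect_add round_expect_const[OF profile_at])
  qed
  then have "hist_expect K b P q 1 (\<lambda>h. - agent_gain g h) h \<le> - agent_gain g h + 0" for h
    using hist_expect_scale[of K b P q 1 "-1" "agent_gain g" h] by simp
  from hist_expect_drift[OF profile this, of T "[]"] show ?thesis
    using hist_expect_scale[of K b P q T "-1" "agent_gain g" "[]"] by simp
qed

lemma expn_regret_le_horizon: "expn_regret K b \<eta> \<delta> g q T \<le> real T"
  unfolding expn_regret_def
proof (rule Max_diff_le[OF K_pos])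
  fix j assume "j < K"
  then show "expected T (arm_gain g j) - expected T (agent_gain g) \<le> real T"
    using arm_gain_expect_le[of j T] agent_gain_expect_nonneg[of T] by linarith
qed

lemma expn_regret_single_arm:
  assumes "K = 1"
  shows "expn_regret K b \<eta> \<delta> g q T \<le> 0"
proof -
  have "hist_expect K b P q 1 (\<lambda>h. arm_gain g 0 h - agent_gain g h) h
      \<le> (arm_gain g 0 h - agent_gain g h) + 0" for h
  proof -
    have "round_expect K b (P h) (q h) (\<lambda>a c. g h a) = g h 0"
      using round_expect_agent[OF profile_at(2)] P_sum[of h] assms by simp
    then show ?thesis unfolding hist_expect_one
      by (simp add: round_expect_diff round_expect_add round_expect_const[OF profile_at])
  qed
  from hist_expect_drift[OF profile this, of T "[]"] show ?thesis
    unfolding expn_regret_def using assms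
    by (intro Max_diff_le[OF K_pos]) (simp add: hist_expect_diff)
qed

lemma expn_regret_le:
  assumes "\<delta> \<le> \<eta> * rate"
  shows "expn_regret K b \<eta> \<delta> g q T \<le> \<eta> * real T + ln (real K) / \<delta> + real T * \<delta> / rate"
  unfolding expn_regret_def
proof (rule Max_diff_le[OF K_pos])
  fix j assume j: "j < K"
  define Gj where "Gj = expected T (arm_gain g j)"
  define GA where "GA = expected T (agent_gain g)"
  have "\<delta> * ((1 - \<eta>) * Gj - GA) \<le> (1 - \<eta>) * ln (real K) + real T * (\<delta>^2 / rate)"
    using scaled_regret_le[OF assms j, of T] by (simp add: Gj_def GA_def algebra_simps)
  also have "\<dots> \<le> \<delta> * (ln (real K) / \<delta> + real T * \<delta> / rate)"
    using eta K_pos delta_pos mult_left_le_one_le[of "ln (real K)" "1 - \<eta>"]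
    by (simp add: algebra_simps power2_eq_square)
  finally have "(1 - \<eta>) * Gj - GA \<le> ln (real K) / \<delta> + real T * \<delta> / rate"
    using delta_pos by simp
  moreover have "\<eta> * Gj \<le> \<eta> * real T"
    using arm_gain_expect_le[OF j] eta by (simp add: Gj_def mult_left_mono)
  ultimately show "Gj - GA \<le> \<eta> * real T + ln (real K) / \<delta> + real T * \<delta> / rate"
    by (simp add: algebra_simps)
qed

end

lemma sqrt_tuning_le:
  fixes B L T s :: real
  assumes "0 < B" "0 < L" "0 < T" and s: "s = sqrt (B * L / (2 * T))"
  shows "2 * s * T + B * L / s \<le> 3 * sqrt ((B + 1) * T * L)"
proof -
  have "0 < s" using assms by simp
  have s2: "s^2 = B * L / (2 * T)" using assms by simp
  then have "B * L / s = 2 * s * T"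
    using \<open>0 < s\<close> \<open>0 < T\<close> by (simp add: field_simps power2_eq_square)
  then have "2 * s * T + B * L / s = 4 * s * T" by simp
  also have "\<dots> \<le> 3 * sqrt ((B + 1) * T * L)"
  proof (rule power2_le_imp_le)
    have "(4 * s * T)^2 = 8 * B * L * T"
      using s2 \<open>0 < T\<close> by (simp add: power_mult_distrib field_simps power2_eq_square)
    also have "\<dots> \<le> (3 * sqrt ((B + 1) * T * L))^2"
      using assms by (simp add: power_mult_distrib algebra_simps)
    finally show "(4 * s * T)^2 \<le> (3 * sqrt ((B + 1) * T * L))^2" .
  qed (use assms in simp)
  finally show ?thesis .
qed

lemma le_sqrt_of_short_horizon:
  fixes B L T :: real
  assumes "0 \<le> T" "0 \<le> B" "0 \<le> L" "2 * T \<le> B * L"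
  shows "T \<le> sqrt ((B + 1) * T * L)"
proof (rule real_le_rsqrt)
  have "T^2 \<le> T * (B * L)" using assms by (simp add: power2_eq_square mult_left_mono)
  also have "\<dots> \<le> (B + 1) * T * L" using assms by (simp add: algebra_simps)
  finally show "T^2 \<le> (B + 1) * T * L" .
qed

text \<open>\<eta> = sqrt (ln K / (2 T rate)) and \<delta> = \<eta> rate balance the terms of expn_regret_le.
  For K = 1 or T = 0 the regret vanishes whatever the parameters.\<close>
definition expn_eta :: "nat \<Rightarrow> nat \<Rightarrow> real \<Rightarrow> real" where
  "expn_eta K T \<Theta> = (if 2 \<le> K \<and> 1 \<le> T
     then min 1 (sqrt (1 / expn_rate K \<Theta> * ln (real K) / (2 * real T))) else 0)"

definition expn_delta :: "nat \<Rightarrow> nat \<Rightarrow> real \<Rightarrow> real" where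
  "expn_delta K T \<Theta> = (if 2 \<le> K \<and> 1 \<le> T then expn_eta K T \<Theta> * expn_rate K \<Theta> else 1)"

lemma expn_params:
  assumes "1 \<le> K" "\<Theta> \<le> 1"
  shows "0 \<le> expn_eta K T \<Theta>" "expn_eta K T \<Theta> \<le> 1" "0 < expn_delta K T \<Theta>"
proof -
  have "0 < expn_rate K \<Theta>" using expn_rate_pos[OF assms] .
  then have "2 \<le> K \<and> 1 \<le> T \<Longrightarrow> 0 < expn_eta K T \<Theta>" by (simp add: expn_eta_def)
  then show "0 \<le> expn_eta K T \<Theta>" "expn_eta K T \<Theta> \<le> 1" "0 < expn_delta K T \<Theta>"
    using \<open>0 < expn_rate K \<Theta>\<close> by (auto simp: expn_eta_def expn_delta_def)
qed

lemma expn_regret_tuned: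
  fixes T :: nat
  assumes K: "1 \<le> K" and eps: "\<forall>i<b. 0 < \<epsilon> i \<and> \<epsilon> i \<le> 1" and env: "valid_env K b \<epsilon> g q"
  defines "\<Theta> \<equiv> miss_prob_bound K b \<epsilon>"
  defines "\<eta> \<equiv> expn_eta K T \<Theta>" and "\<delta> \<equiv> expn_delta K T \<Theta>"
  shows "expn_regret K b \<eta> \<delta> g q T \<le> 3 * sqrt ((1 / expn_rate K \<Theta> + 1) * real T * ln (real K))"
proof -
  have "\<Theta> \<le> 1" unfolding \<Theta>_def using miss_prob_bound_bounds[OF K eps] by simp
  interpret expn K b \<epsilon> g q \<eta> \<delta>
    using expn_params[OF K \<open>\<Theta> \<le> 1\<close>] K eps env by unfold_locales (simp_all add: \<eta>_def \<delta>_def)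
  define B where "B = 1 / rate"
  define L where "L = ln (real K)"
  have "0 < B" using rate_pos by (simp add: B_def)
  have "0 \<le> L" using K by (simp add: L_def)
  show ?thesis
  proof (cases "2 \<le> K \<and> 1 \<le> T")
    case False
    have "expn_regret K b \<eta> \<delta> g q T \<le> 0"
    proof (cases "T = 0")
      case True
      then show ?thesis using expn_regret_le_horizon[of T] by simp
    next
      case False
      then have "K = 1" using \<open>\<not> (2 \<le> K \<and> 1 \<le> T)\<close> K by simp
      then show ?thesis by (rule expn_regret_single_arm)
    qed
    moreover have "0 \<le> sqrt ((1 / rate + 1) * real T * ln (real K))"
      using rate_pos K by simp
    ultimately show ?thesis unfolding \<Theta>_def by linarith
  next
    case True
    define s where "s = sqrt (B * L / (2 * real T))"
    have "0 < L" "0 < real T" using True by (simp_all add: L_def)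
    have \<eta>_eq: "\<eta> = min 1 s" and \<delta>_eq: "\<delta> = \<eta> * rate"
      using True by (simp_all add: \<eta>_def \<delta>_def expn_eta_def expn_delta_def s_def B_def L_def \<Theta>_def)
    show ?thesis
    proof (cases "s \<le> 1")
      case True
      then have "\<eta> = s" "0 < s" using \<eta>_eq \<open>0 < B\<close> \<open>0 < L\<close> \<open>0 < real T\<close> by (simp_all add: s_def)
      have "expn_regret K b \<eta> \<delta> g q T \<le> \<eta> * real T + L / \<delta> + real T * \<delta> / rate"
        using expn_regret_le[of T] \<delta>_eq by (simp add: L_def)
      also have "\<dots> = 2 * s * real T + B * L / s"
        using \<open>\<eta> = s\<close> \<delta>_eq rate_pos by (simp add: B_def field_simps)
      also have "\<dots> \<le> 3 * sqrt ((B + 1) * real T * L)"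
        by (rule sqrt_tuning_le[OF \<open>0 < B\<close> \<open>0 < L\<close> \<open>0 < real T\<close> s_def])
      finally show ?thesis by (simp add: B_def L_def \<Theta>_def)
    next
      case False
      then have "1 < B * L / (2 * real T)" by (simp add: s_def)
      then have "2 * real T \<le> B * L" using \<open>0 < real T\<close> by (simp add: field_simps)
      then have "real T \<le> 3 * sqrt ((B + 1) * real T * L)"
        using le_sqrt_of_short_horizon[of "real T" B L] \<open>0 < B\<close> \<open>0 \<le> L\<close> by simp
      then show ?thesis using expn_regret_le_horizon[of T] by (simp add: B_def L_def \<Theta>_def)
    qed
  qed
qed

theorem mainTheorem3:
  shows "\<exists>C>0. \<exists>\<eta>f \<delta>f :: nat \<Rightarrow> nat \<Rightarrow> real \<Rightarrow> real.
     \<forall>K T b (\<epsilon> :: nat \<Rightarrow> real). K \<ge> 1 \<and> (\<forall>i<b. 0 < \<epsilon> i \<and> \<epsilon> i \<le> 1) \<longrightarrow>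
       (let \<Theta> = (\<Prod>i<b. 1 - \<epsilon> i / real K);
            \<beta> = 1 / (1 - (1 - 1 / real K) * \<Theta>) + 1;
            \<eta> = \<eta>f K T \<Theta>;
            \<delta> = \<delta>f K T \<Theta>
        in 0 \<le> \<eta> \<and> \<eta> \<le> 1 \<and> 0 < \<delta> \<and>
           (\<forall>g q. valid_env K b \<epsilon> g q \<longrightarrow>
              expn_regret K b \<eta> \<delta> g q T \<le> C * sqrt (\<beta> * real T * ln (real K))))"
  (is "\<exists>C>0. \<exists>\<eta>f \<delta>f. ?guarantee C \<eta>f \<delta>f")
proof -
  have "?guarantee 3 expn_eta expn_delta"
  proof (intro allI impI)
    fix K T b :: nat and \<epsilon> :: "nat \<Rightarrow> real"
    assume "K \<ge> 1 \<and> (\<forall>i<b. 0 < \<epsilon> i \<and> \<epsilon> i \<le> 1)"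
    then have K: "1 \<le> K" and eps: "\<forall>i<b. 0 < \<epsilon> i \<and> \<epsilon> i \<le> 1" by auto
    have "miss_prob_bound K b \<epsilon> \<le> 1" using miss_prob_bound_bounds[OF K eps] by simp
    then show "let \<Theta> = (\<Prod>i<b. 1 - \<epsilon> i / real K);
            \<beta> = 1 / (1 - (1 - 1 / real K) * \<Theta>) + 1;
            \<eta> = expn_eta K T \<Theta>;
            \<delta> = expn_delta K T \<Theta>
        in 0 \<le> \<eta> \<and> \<eta> \<le> 1 \<and> 0 < \<delta> \<and>
           (\<forall>g q. valid_env K b \<epsilon> g q \<longrightarrow>
              expn_regret K b \<eta> \<delta> g q T \<le> 3 * sqrt (\<beta> * real T * ln (real K)))"
      using expn_params[OF K] expn_regret_tuned[OF K eps, of _ _ T]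
      by (simp add: Let_def miss_prob_bound_def expn_rate_def)
  qed
  moreover have "(0 :: real) < 3" by simp
  ultimately show ?thesis by blast
qed

end
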